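(* If the point graph of a partial geometry $pg(s,2,3)$ (with $s\ge 2$) is $3$-e.c., then $s\le 15$.
   Context: A partial geometry $pg(s,t,\alpha)$ is an incidence structure of points and lines such that any two distinct points lie on at most one common line, every line contains exactly $s+1$ points, every point lies on exactly $t+1$ lines, and for every point $p$ and line $L$ with $p$ not on $L$ there are exactly $\alpha$ lines through $p$ meeting $L$. The point graph has the points as vertices, two distinct points adjacent iff collinear. (A $pg(s,2,3)$ is the dual of a Steiner triple system on $2s+3$ points, and its point graph is the block-intersection graph of that system.) A graph with vertex set $V$ is $n$-e.c. if for every pair of disjoint subsets $A,B\subseteq V$ with $|A\cup B|=n$ (either may be empty) there is a vertex $z\notin A\cup B$ adjacent to every vertex of $A$ and to no vertex of $B$. *)

theory Defs
  imports Main
begin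

definition partial_geometry ::
  "'p set \<Rightarrow> 'l set \<Rightarrow> ('p \<Rightarrow> 'l \<Rightarrow> bool) \<Rightarrow> nat \<Rightarrow> nat \<Rightarrow> nat \<Rightarrow> bool" where
  "partial_geometry P L I s t \<alpha> \<longleftrightarrow>
     P \<noteq> {} \<and>
     (\<forall>p\<in>P. \<forall>q\<in>P. p \<noteq> q \<longrightarrow> card {l\<in>L. I p l \<and> I q l} \<le> 1) \<and>
     (\<forall>l\<in>L. finite {p\<in>P. I p l} \<and> card {p\<in>P. I p l} = s + 1) \<and>
     (\<forall>p\<in>P. finite {l\<in>L. I p l} \<and> card {l\<in>L. I p l} = t + 1) \<and>
     (\<forall>p\<in>P. \<forall>l\<in>L. \<not> I p l \<longrightarrow>
        card {m\<in>L. I p m \<and> (\<exists>q\<in>P. I q m \<and> I q l)} = \<alpha>)"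

definition point_graph_adj :: "'p set \<Rightarrow> 'l set \<Rightarrow> ('p \<Rightarrow> 'l \<Rightarrow> bool) \<Rightarrow> 'p \<Rightarrow> 'p \<Rightarrow> bool" where
  "point_graph_adj P L I p q \<longleftrightarrow> p \<in> P \<and> q \<in> P \<and> p \<noteq> q \<and> (\<exists>l\<in>L. I p l \<and> I q l)"

definition n_ec :: "nat \<Rightarrow> 'a set \<Rightarrow> ('a \<Rightarrow> 'a \<Rightarrow> bool) \<Rightarrow> bool" where
  "n_ec n V E \<longleftrightarrow>
     (\<forall>A B. A \<subseteq> V \<longrightarrow> B \<subseteq> V \<longrightarrow> A \<inter> B = {} \<longrightarrow> finite (A \<union> B) \<longrightarrow> card (A \<union> B) = n \<longrightarrow>
        (\<exists>z\<in>V. z \<notin> A \<union> B \<and> (\<forall>a\<in>A. E z a) \<and> (\<forall>b\<in>B. \<not> E z b)))"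

end

theory Submission
  imports Defs
begin

(* In a pg(s,2,3) every point off a line sees that line along all
   three of its lines, so any two lines meet in exactly one point.  Counting flags
   and the lines meeting a fixed line gives 3|P| = |L|(s+1) and |L| >= 2s+3.
   For s >= 16 there are two non-collinear points a, b.  Applying 3-e.c. to
   {a, b, c} shows that every point c is collinear with a common neighbour of a
   and b; hence the lines through a, through b, and through the (at most 9) common
   neighbours of a and b cover all points, and there are at most 3+3+9 = 15 of them.
   Finally, a finite set S of k pairwise meeting lines covering P satisfies
   3|P| + k(k-1) <= 3k(s+1) (double counting incidences and pairs of lines of S
   through each point), which contradicts |P| >= (2s+3)(s+1)/3 when k <= 15.
   The file first develops these facts for general pg(s,t,t+1), then specialises. *)

lemma double_count:
  assumes "finite A" "finite B"
  shows "(\<Sum>a\<in>A. card {b\<in>B. R a b}) = (\<Sum>b\<in>B. card {a\<in>A. R a b})"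
proof -
  have "(\<Sum>a\<in>A. card {b\<in>B. R a b}) = (\<Sum>a\<in>A. \<Sum>b\<in>{b\<in>B. R a b}. 1)" by simp
  also have "\<dots> = (\<Sum>b\<in>B. \<Sum>a\<in>{a\<in>A. R a b}. 1)"
    by (rule sum.swap_restrict[OF assms])
  also have "\<dots> = (\<Sum>b\<in>B. card {a\<in>A. R a b})" by simp
  finally show ?thesis .
qed

lemma card_ordered_pairs_distinct:
  assumes "finite A"
  shows "card {pr\<in>A\<times>A. fst pr \<noteq> snd pr} = card A * (card A - 1)"
proof -
  have split: "A \<times> A = {pr\<in>A\<times>A. fst pr \<noteq> snd pr} \<union> (\<lambda>x. (x,x)) ` A" by auto
  have "card (A \<times> A) = card {pr\<in>A\<times>A. fst pr \<noteq> snd pr} + card ((\<lambda>x. (x,x)) ` A)"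
    by (subst split, rule card_Un_disjoint) (use assms in auto)
  moreover have "card ((\<lambda>x. (x,x)) ` A) = card A" by (rule card_image) (auto intro: inj_onI)
  ultimately show ?thesis by (simp add: card_cartesian_product diff_mult_distrib2)
qed

text \<open>The key numerical inequality: for a point on d of the lines of a family,
  where 1 <= d <= t+1, we have d(d-1) + (t+1) <= (t+1)d, i.e. (d-1)(t+1-d) >= 0.\<close>
lemma degree_inequality:
  fixes d t :: nat
  assumes "1 \<le> d" "d \<le> t + 1"
  shows "d * (d - 1) + (t + 1) \<le> (t + 1) * d"
proof -
  obtain e where d: "d = e + 1" using assms(1) by (metis add.commute le_Suc_ex Suc_eq_plus1_left)
  obtain f where t: "t = e + f" using assms(2) d by (metis add_le_cancel_right le_Suc_ex)
  show ?thesis unfolding d t by (simp add: algebra_simps)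
qed

locale partial_geom =
  fixes P :: "'p set" and L :: "'l set" and I :: "'p \<Rightarrow> 'l \<Rightarrow> bool" and s t \<alpha> :: nat
  assumes pg: "partial_geometry P L I s t \<alpha>"
begin

definition lines :: "'p \<Rightarrow> 'l set" where "lines p = {l\<in>L. I p l}"
definition pts :: "'l \<Rightarrow> 'p set" where "pts l = {p\<in>P. I p l}"

lemma points_nonempty: "P \<noteq> {}"
  using pg unfolding partial_geometry_def by auto

lemma finite_lines: "p \<in> P \<Longrightarrow> finite (lines p)"
  using pg unfolding partial_geometry_def lines_def by auto

lemma card_lines: "p \<in> P \<Longrightarrow> card (lines p) = t + 1"
  using pg unfolding partial_geometry_def lines_def by auto

lemma finite_pts: "l \<in> L \<Longrightarrow> finite (pts l)"
  using pg unfolding partial_geometry_def pts_def by auto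

lemma card_pts: "l \<in> L \<Longrightarrow> card (pts l) = s + 1"
  using pg unfolding partial_geometry_def pts_def by auto

lemma point_on_line:
  assumes "l \<in> L" obtains p where "p \<in> P" "I p l"
proof -
  have "pts l \<noteq> {}" using card_pts[OF assms] finite_pts[OF assms] by auto
  then show ?thesis using that unfolding pts_def by auto
qed

lemma line_through_point:
  assumes "p \<in> P" obtains l where "l \<in> L" "I p l"
proof -
  have "lines p \<noteq> {}" using card_lines[OF assms] by auto
  then show ?thesis using that unfolding lines_def by auto
qed

lemma unique_line:
  assumes "p \<in> P" "q \<in> P" "p \<noteq> q" "l \<in> L" "m \<in> L" "I p l" "I q l" "I p m" "I q m"
  shows "l = m"
proof -
  have le1: "card {l\<in>L. I p l \<and> I q l} \<le> 1"
    using pg assms unfolding partial_geometry_def by auto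
  have "finite {l\<in>L. I p l \<and> I q l}"
    using finite_lines[OF assms(1)] unfolding lines_def by (rule finite_subset[rotated]) auto
  with le1 show ?thesis using assms by (auto simp: card_le_Suc0_iff_eq)
qed

lemma card_common_points:
  assumes "l \<in> L" "m \<in> L" "l \<noteq> m"
  shows "card {z\<in>P. I z l \<and> I z m} \<le> 1"
proof -
  have "finite {z\<in>P. I z l \<and> I z m}"
    using finite_pts[OF assms(1)] unfolding pts_def by (rule finite_subset[rotated]) auto
  then show ?thesis using unique_line assms by (auto simp: card_le_Suc0_iff_eq)
qed

lemma card_collinear_points:
  assumes "a \<in> P"
  shows "card (\<Union>l\<in>lines a. pts l) \<le> (t + 1) * (s + 1)"
proof -
  have "card (\<Union>l\<in>lines a. pts l) \<le> (\<Sum>l\<in>lines a. card (pts l))"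
    by (rule card_UN_le[OF finite_lines[OF assms]])
  also have "\<dots> = (\<Sum>l\<in>lines a. s + 1)"
    by (rule sum.cong) (auto simp: lines_def card_pts)
  also have "\<dots> = (t + 1) * (s + 1)" using card_lines[OF assms] by simp
  finally show ?thesis .
qed

end

section \<open>Partial geometries with \<alpha> = t + 1\<close>

text \<open>When \<alpha> = t + 1, every point off a line is joined to it by all its lines;
  equivalently, any two lines meet.  These are the duals of Steiner 2-designs
  with block size t + 1; e.g. pg(s,2,3) is the dual of a Steiner triple system.\<close>
locale partial_geom_meeting = partial_geom P L I s t \<alpha>
  for P :: "'p set" and L :: "'l set" and I :: "'p \<Rightarrow> 'l \<Rightarrow> bool" and s t \<alpha> :: nat +
  assumes alpha: "\<alpha> = t + 1"
begin

lemma lines_meet: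
  assumes "l \<in> L" "m \<in> L"
  obtains q where "q \<in> P" "I q l" "I q m"
proof -
  obtain p where p: "p \<in> P" "I p m" using point_on_line[OF assms(2)] by blast
  show ?thesis
  proof (cases "I p l")
    case True then show ?thesis using that p by blast
  next
    case False
    let ?X = "{m'\<in>L. I p m' \<and> (\<exists>q\<in>P. I q m' \<and> I q l)}"
    have "card ?X = t + 1" using pg alpha p False assms unfolding partial_geometry_def by auto
    moreover have "?X \<subseteq> lines p" unfolding lines_def by auto
    ultimately have "?X = lines p"
      using card_subset_eq[OF finite_lines[OF p(1)]] card_lines[OF p(1)] by simp
    then have "m \<in> ?X" using p assms unfolding lines_def by auto
    then show ?thesis using that by blast
  qed
qed

text \<open>Every point lies on a line through a point of a fixed line L0, so P is finite.\<close>
lemma finite_P: "finite P"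
proof -
  obtain p0 where p0: "p0 \<in> P" using points_nonempty by auto
  obtain L0 where L0: "L0 \<in> L" "I p0 L0" using line_through_point[OF p0] by blast
  have "P \<subseteq> (\<Union>q\<in>pts L0. \<Union>m\<in>lines q. pts m)"
  proof
    fix p assume p: "p \<in> P"
    obtain l where l: "l \<in> L" "I p l" using line_through_point[OF p] by blast
    obtain q where "q \<in> P" "I q l" "I q L0" using lines_meet[OF l(1) L0(1)] by blast
    then show "p \<in> (\<Union>q\<in>pts L0. \<Union>m\<in>lines q. pts m)"
      using l p by (auto simp: pts_def lines_def)
  qed
  moreover have "finite (\<Union>q\<in>pts L0. \<Union>m\<in>lines q. pts m)"
    using finite_pts[OF L0(1)] finite_pts finite_lines by (auto simp: pts_def lines_def)
  ultimately show ?thesis by (rule finite_subset)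
qed

lemma finite_L: "finite L"
proof -
  have "L \<subseteq> (\<Union>p\<in>P. lines p)"
    by (auto simp: lines_def elim: point_on_line)
  moreover have "finite (\<Union>p\<in>P. lines p)" using finite_P finite_lines by auto
  ultimately show ?thesis by (rule finite_subset)
qed

lemma flag_count: "(t + 1) * card P = card L * (s + 1)"
proof -
  have "(\<Sum>p\<in>P. card {l\<in>L. I p l}) = (\<Sum>l\<in>L. card {p\<in>P. I p l})"
    by (rule double_count[OF finite_P finite_L])
  moreover have "(\<Sum>p\<in>P. card {l\<in>L. I p l}) = (\<Sum>p\<in>P. t + 1)"
    by (rule sum.cong) (auto simp: card_lines[unfolded lines_def])
  moreover have "(\<Sum>l\<in>L. card {p\<in>P. I p l}) = (\<Sum>l\<in>L. s + 1)"
    by (rule sum.cong) (auto simp: card_pts[unfolded pts_def])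
  ultimately show ?thesis by (simp add: mult.commute)
qed

text \<open>A line L0 together with the t further lines through each of its s+1 points
  gives t(s+1)+1 distinct lines.\<close>
lemma card_lines_lower: "t * (s + 1) + 1 \<le> card L"
proof -
  obtain p0 where p0: "p0 \<in> P" using points_nonempty by auto
  obtain L0 where L0: "L0 \<in> L" "I p0 L0" using line_through_point[OF p0] by blast
  let ?X = "\<Union>q\<in>pts L0. lines q - {L0}"
  have "card ?X = (\<Sum>q\<in>pts L0. card (lines q - {L0}))"
  proof (rule card_UN_disjoint)
    show "finite (pts L0)" using finite_pts[OF L0(1)] .
    show "\<forall>q\<in>pts L0. finite (lines q - {L0})" using finite_lines by (auto simp: pts_def)
    show "\<forall>q\<in>pts L0. \<forall>q'\<in>pts L0. q \<noteq> q' \<longrightarrow> (lines q - {L0}) \<inter> (lines q' - {L0}) = {}"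
      using unique_line L0(1) by (auto simp: pts_def lines_def)
  qed
  also have "\<dots> = (\<Sum>q\<in>pts L0. t)"
  proof (rule sum.cong)
    fix q assume "q \<in> pts L0"
    then have "q \<in> P" "L0 \<in> lines q" using L0 by (auto simp: pts_def lines_def)
    then show "card (lines q - {L0}) = t" using card_lines finite_lines by simp
  qed simp
  also have "\<dots> = t * (s + 1)" using card_pts[OF L0(1)] by simp
  finally have card_X: "card ?X = t * (s + 1)" .
  have sub: "insert L0 ?X \<subseteq> L" by (auto simp: lines_def L0)
  have "L0 \<notin> ?X" by blast
  then have "card (insert L0 ?X) = card ?X + 1"
    using finite_subset[OF sub finite_L] by (simp del: UN_simps)
  then show ?thesis using card_mono[OF finite_L sub] card_X by simp
qed

subsection \<open>Families of lines covering points\<close>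

definition degree :: "'l set \<Rightarrow> 'p \<Rightarrow> nat" where
  "degree S p = card {M\<in>S. I p M}"

definition covered :: "'l set \<Rightarrow> 'p set" where
  "covered S = {p\<in>P. \<exists>M\<in>S. I p M}"

lemma degree_range:
  assumes "S \<subseteq> L" "finite S" "p \<in> covered S"
  shows "1 \<le> degree S p" "degree S p \<le> t + 1"
proof -
  have p: "p \<in> P" "{M\<in>S. I p M} \<subseteq> lines p" using assms unfolding covered_def lines_def by auto
  show "degree S p \<le> t + 1"
    unfolding degree_def using card_mono[OF finite_lines p(2)] card_lines p(1) by simp
  show "1 \<le> degree S p"
    using assms unfolding covered_def degree_def by (auto simp: Suc_le_eq card_gt_0_iff)
qed

text \<open>Each line of S contributes its s+1 points.\<close>
lemma sum_degree:
  assumes "S \<subseteq> L" "finite S"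
  shows "(\<Sum>p\<in>covered S. degree S p) = card S * (s + 1)"
proof -
  have fin: "finite (covered S)" using finite_P unfolding covered_def by auto
  have "(\<Sum>p\<in>covered S. degree S p) = (\<Sum>M\<in>S. card {p\<in>covered S. I p M})"
    unfolding degree_def by (rule double_count[OF fin assms(2)])
  also have "\<dots> = (\<Sum>M\<in>S. s + 1)"
  proof (rule sum.cong)
    fix M assume "M \<in> S"
    then have "{p\<in>covered S. I p M} = pts M" "M \<in> L"
      using assms unfolding covered_def pts_def by auto
    then show "card {p\<in>covered S. I p M} = s + 1" using card_pts by simp
  qed simp
  finally show ?thesis by simp
qed

text \<open>Each ordered pair of distinct lines of S meets in exactly one point.\<close>
lemma sum_degree_pairs:
  assumes "S \<subseteq> L" "finite S"
  shows "(\<Sum>p\<in>covered S. degree S p * (degree S p - 1)) = card S * (card S - 1)"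
proof -
  define D where "D = {pr\<in>S\<times>S. fst pr \<noteq> snd pr}"
  have fin: "finite (covered S)" using finite_P unfolding covered_def by auto
  have "(\<Sum>p\<in>covered S. degree S p * (degree S p - 1))
        = (\<Sum>p\<in>covered S. card {pr\<in>D. I p (fst pr) \<and> I p (snd pr)})"
  proof (rule sum.cong)
    fix p
    have "{pr\<in>D. I p (fst pr) \<and> I p (snd pr)}
          = {pr\<in>{M\<in>S. I p M}\<times>{M\<in>S. I p M}. fst pr \<noteq> snd pr}"
      unfolding D_def by auto
    then show "degree S p * (degree S p - 1) = card {pr\<in>D. I p (fst pr) \<and> I p (snd pr)}"
      unfolding degree_def using card_ordered_pairs_distinct[of "{M\<in>S. I p M}"] assms by simp
  qed simp
  also have "\<dots> = (\<Sum>pr\<in>D. card {p\<in>covered S. I p (fst pr) \<and> I p (snd pr)})"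
    by (rule double_count[OF fin]) (use assms in \<open>simp add: D_def\<close>)
  also have "\<dots> = (\<Sum>pr\<in>D. 1)"
  proof (rule sum.cong)
    fix pr assume "pr \<in> D"
    then have l: "fst pr \<in> L" "snd pr \<in> L" "fst pr \<noteq> snd pr" "fst pr \<in> S"
      using assms unfolding D_def by auto
    obtain q where q: "q \<in> P" "I q (fst pr)" "I q (snd pr)" using lines_meet[OF l(1,2)] by blast
    have "{p\<in>covered S. I p (fst pr) \<and> I p (snd pr)} = {q}"
      using q l unique_line[of _ q "fst pr" "snd pr"] unfolding covered_def by auto
    then show "card {p\<in>covered S. I p (fst pr) \<and> I p (snd pr)} = 1" by simp
  qed simp
  also have "\<dots> = card S * (card S - 1)"
    using card_ordered_pairs_distinct[OF assms(2)] unfolding D_def by simp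
  finally show ?thesis .
qed

lemma covering_inequality:
  assumes "S \<subseteq> L" "finite S"
  shows "(t + 1) * card (covered S) + card S * (card S - 1) \<le> (t + 1) * (card S * (s + 1))"
proof -
  have "(t + 1) * card (covered S) + card S * (card S - 1)
        = (\<Sum>p\<in>covered S. degree S p * (degree S p - 1) + (t + 1))"
    unfolding sum.distrib sum_degree_pairs[OF assms] by simp
  also have "\<dots> \<le> (\<Sum>p\<in>covered S. (t + 1) * degree S p)"
    by (intro sum_mono degree_inequality degree_range[OF assms])
  also have "\<dots> = (t + 1) * (card S * (s + 1))"
    by (simp only: sum_distrib_left[symmetric] sum_degree[OF assms])
  finally show ?thesis .
qed

subsection \<open>Common neighbours of two non-collinear points\<close>

definition noncollinear :: "'p \<Rightarrow> 'p \<Rightarrow> bool" where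
  "noncollinear a b \<longleftrightarrow> (\<forall>l\<in>lines a. \<not> I b l)"

definition common_nbrs :: "'p \<Rightarrow> 'p \<Rightarrow> 'p set" where
  "common_nbrs a b = {z\<in>P. (\<exists>l\<in>lines a. I z l) \<and> (\<exists>l\<in>lines b. I z l)}"

definition cover_lines :: "'p \<Rightarrow> 'p \<Rightarrow> 'l set" where
  "cover_lines a b = lines a \<union> lines b \<union> (\<Union>z\<in>common_nbrs a b. lines z)"

lemma noncollinear_lines_distinct:
  "noncollinear a b \<Longrightarrow> la \<in> lines a \<Longrightarrow> lb \<in> lines b \<Longrightarrow> la \<noteq> lb"
  unfolding noncollinear_def lines_def by blast

text \<open>Each pair of a line through a and a line through b yields at most one common
  neighbour, so there are at most (t+1)^2 of them.\<close>
lemma card_common_nbrs: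
  assumes "a \<in> P" "b \<in> P" "noncollinear a b"
  shows "card (common_nbrs a b) \<le> (t + 1) * (t + 1)"
proof -
  let ?U = "\<Union>la\<in>lines a. \<Union>lb\<in>lines b. {z\<in>P. I z la \<and> I z lb}"
  have sub: "common_nbrs a b \<subseteq> ?U"
  proof
    fix z assume "z \<in> common_nbrs a b"
    then obtain la lb where "la \<in> lines a" "lb \<in> lines b" "z \<in> P" "I z la" "I z lb"
      unfolding common_nbrs_def by blast
    then show "z \<in> ?U" by blast
  qed
  have "card ?U \<le> (\<Sum>la\<in>lines a. card (\<Union>lb\<in>lines b. {z\<in>P. I z la \<and> I z lb}))"
    by (rule card_UN_le[OF finite_lines[OF assms(1)]])
  also have "\<dots> \<le> (\<Sum>la\<in>lines a. \<Sum>lb\<in>lines b. card {z\<in>P. I z la \<and> I z lb})"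
    by (intro sum_mono card_UN_le finite_lines assms(2))
  also have "\<dots> \<le> (\<Sum>la\<in>lines a. \<Sum>lb\<in>lines b. 1)"
    using noncollinear_lines_distinct[OF assms(3)]
    by (intro sum_mono card_common_points) (auto simp: lines_def)
  also have "\<dots> = (t + 1) * (t + 1)" using card_lines assms(1,2) by simp
  finally have "card ?U \<le> (t + 1) * (t + 1)" .
  moreover have "finite ?U" by (rule finite_subset[OF _ finite_P]) auto
  ultimately show ?thesis using card_mono[OF _ sub] by (meson order_trans)
qed

text \<open>A common neighbour z has a line through a and a distinct line through b, so
  at most t - 1 of its lines are new.\<close>
lemma card_new_lines:
  assumes "noncollinear a b" "z \<in> common_nbrs a b"
  shows "card (lines z - (lines a \<union> lines b)) \<le> t - 1"
proof -
  obtain la lb where l: "la \<in> lines a" "lb \<in> lines b" "la \<in> lines z" "lb \<in> lines z" "z \<in> P"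
    using assms(2) unfolding common_nbrs_def lines_def by auto
  have "la \<noteq> lb" using noncollinear_lines_distinct[OF assms(1) l(1,2)] .
  then have "card (lines z - {la, lb}) = t - 1"
    using l card_lines finite_lines by (simp add: card_Diff_subset)
  moreover have "lines z - (lines a \<union> lines b) \<subseteq> lines z - {la, lb}" using l by auto
  then have "card (lines z - (lines a \<union> lines b)) \<le> card (lines z - {la, lb})"
    by (rule card_mono[rotated]) (simp add: finite_lines l(5))
  ultimately show ?thesis by simp
qed

lemma card_cover_lines:
  assumes "a \<in> P" "b \<in> P" "noncollinear a b"
  shows "card (cover_lines a b) \<le> 2 * (t + 1) + (t + 1) * (t + 1) * (t - 1)"
proof -
  let ?N = "\<Union>z\<in>common_nbrs a b. lines z - (lines a \<union> lines b)"
  have fin: "finite (common_nbrs a b)" using finite_P unfolding common_nbrs_def by auto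
  have "cover_lines a b = lines a \<union> lines b \<union> ?N" unfolding cover_lines_def by blast
  then have "card (cover_lines a b) \<le> card (lines a) + card (lines b) + card ?N"
    using card_Un_le[of "lines a" "lines b"] card_Un_le[of "lines a \<union> lines b" ?N] by simp
  also have "card ?N \<le> (\<Sum>z\<in>common_nbrs a b. card (lines z - (lines a \<union> lines b)))"
    by (rule card_UN_le[OF fin])
  also have "\<dots> \<le> (\<Sum>z\<in>common_nbrs a b. t - 1)"
    by (intro sum_mono card_new_lines assms(3))
  also have "\<dots> = card (common_nbrs a b) * (t - 1)" by simp
  also have "\<dots> \<le> (t + 1) * (t + 1) * (t - 1)"
    by (rule mult_le_mono1[OF card_common_nbrs[OF assms]])
  finally show ?thesis using card_lines assms(1,2) by simp
qed

text \<open>Under 3-e.c. every point c is collinear with a common neighbour of a and b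
  (take z joined to each of a, b, c), so the cover lines cover all points.\<close>
lemma extension_covers:
  assumes ec: "n_ec 3 P (point_graph_adj P L I)"
    and ab: "a \<in> P" "b \<in> P" "noncollinear a b"
  shows "covered (cover_lines a b) = P"
proof -
  have "c \<in> covered (cover_lines a b)" if c: "c \<in> P" for c
  proof (cases "c = a \<or> c = b")
    case True
    then obtain l where "l \<in> L" "I c l" using line_through_point[OF c] by blast
    then show ?thesis using True c unfolding covered_def cover_lines_def lines_def by blast
  next
    case False
    obtain l where "l \<in> L" "I a l" using line_through_point[OF ab(1)] by blast
    then have "a \<noteq> b" using ab(3) unfolding noncollinear_def lines_def by auto
    then have "card {a, b, c} = 3" using False by auto
    then obtain z where z: "z \<in> P" "\<forall>x\<in>{a, b, c}. point_graph_adj P L I z x"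
      using ec[unfolded n_ec_def, rule_format, of "{a, b, c}" "{}"] ab c by auto
    then have "z \<in> common_nbrs a b" unfolding common_nbrs_def point_graph_adj_def lines_def by auto
    moreover obtain l where "l \<in> L" "I z l" "I c l" using z unfolding point_graph_adj_def by auto
    ultimately show ?thesis using c unfolding covered_def cover_lines_def lines_def by blast
  qed
  then show ?thesis unfolding covered_def by auto
qed

lemma exists_noncollinear:
  assumes "a \<in> P" "(t + 1) * (s + 1) < card P"
  obtains b where "b \<in> P" "noncollinear a b"
proof -
  let ?C = "\<Union>l\<in>lines a. pts l"
  have fin: "finite ?C" by (rule finite_subset[OF _ finite_P]) (auto simp: pts_def)
  have "card ?C < card P" using card_collinear_points[OF assms(1)] assms(2) by linarith
  then have "\<not> P \<subseteq> ?C" using card_mono[OF fin] by (meson leD)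
  then show ?thesis using that unfolding noncollinear_def pts_def by auto
qed

end

section \<open>The bound for pg(s,2,3)\<close>

text \<open>With k <= 15 covering lines the covering inequality for t = 2 fails once s >= 16:
  3k(s+1) - k(k-1) <= 45(s+1) - 210, since the difference is (15-k)(3s-11-k) >= 0,
  and (2s+3)(s+1) - (45(s+1) - 210) = 2(s-6)(s-14) > 0.\<close>
lemma pg23_arithmetic:
  fixes s k :: nat
  assumes "16 \<le> s" "k \<le> 15"
  shows "3 * (k * (s + 1)) < (2 * s + 3) * (s + 1) + k * (k - 1)"
proof -
  define K S where "K = int k" and "S = int s"
  have "0 \<le> (15 - K) * (3 * S - 11 - K)"
    using assms unfolding K_def S_def by (intro mult_nonneg_nonneg) auto
  moreover have "0 < (S - 6) * (S - 14)"
    using assms unfolding S_def by (intro mult_pos_pos) auto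
  ultimately have "3 * (K * (S + 1)) < (2 * S + 3) * (S + 1) + (K * K - K)"
    by (simp add: algebra_simps)
  moreover have "int (k * (k - 1)) = K * K - K"
    unfolding K_def by (cases k) (simp_all add: algebra_simps)
  moreover have "int (3 * (k * (s + 1))) = 3 * (K * (S + 1))"
    and "int ((2 * s + 3) * (s + 1)) = (2 * S + 3) * (S + 1)"
    unfolding K_def S_def by (simp_all add: algebra_simps)
  ultimately have "int (3 * (k * (s + 1))) < int ((2 * s + 3) * (s + 1) + k * (k - 1))"
    unfolding of_nat_add by linarith
  then show ?thesis by (simp only: of_nat_less_iff)
qed

theorem mainTheorem11:
  fixes P :: "'p set" and L :: "'l set" and I :: "'p \<Rightarrow> 'l \<Rightarrow> bool" and s :: nat
  assumes "partial_geometry P L I s 2 3"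
    and "s \<ge> 2"
    and "n_ec 3 P (point_graph_adj P L I)"
  shows "s \<le> 15"
proof (rule ccontr)
  interpret partial_geom_meeting P L I s 2 3 by unfold_locales (use assms(1) in simp_all)
  assume "\<not> s \<le> 15"
  then have s: "16 \<le> s" by simp
  have "(2 * s + 3) * (s + 1) = (2 * (s + 1) + 1) * (s + 1)" by (simp add: algebra_simps)
  also have "\<dots> \<le> card L * (s + 1)" by (rule mult_le_mono1[OF card_lines_lower])
  also have "\<dots> = 3 * card P" using flag_count by simp
  finally have many_points: "(2 * s + 3) * (s + 1) \<le> 3 * card P" .
  moreover have "9 * (s + 1) < (2 * s + 3) * (s + 1)" using s by (intro mult_strict_right_mono) auto
  ultimately have "3 * (s + 1) < card P" by linarith
  obtain a where a: "a \<in> P" using points_nonempty by auto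
  obtain b where b: "b \<in> P" "noncollinear a b"
    using exists_noncollinear[OF a] \<open>3 * (s + 1) < card P\<close> by auto
  define S where "S = cover_lines a b"
  have S_lines: "S \<subseteq> L" unfolding S_def cover_lines_def lines_def by auto
  have card_S: "card S \<le> 15" using card_cover_lines[OF a b] unfolding S_def by simp
  have "3 * card P + card S * (card S - 1) \<le> 3 * (card S * (s + 1))"
    using covering_inequality[OF S_lines finite_subset[OF S_lines finite_L]]
      extension_covers[OF assms(3) a b] S_def by simp
  then show False using pg23_arithmetic[OF s card_S] many_points by linarith
qed

end
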